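(* Let $\mathcal{S}$ be a finite set of locations forming a rectangular grid, identified with a set of integer lattice points $\mathcal{S}\subseteq\mathbb{Z}^2$ (grid cells of unit side length), and let $d_E$ denote the Euclidean distance on $\mathbb{R}^2$. Let $\mathcal{G}_1=(\mathcal{S},\mathcal{E}_1)$ be the location policy graph in which each location $\textbf{s}\in\mathcal{S}$ is joined by an edge to each of its (up to) eight closest grid locations, i.e. $\{\textbf{s},\textbf{s}'\}\in\mathcal{E}_1$ iff $\textbf{s}\neq\textbf{s}'$ and $\max(|s_x-s'_x|,|s_y-s'_y|)=1$. Let $\epsilon>0$. If a randomized algorithm $\mathcal{A}$ with input in $\mathcal{S}$ satisfies $\{\epsilon,\mathcal{G}_1\}$-location privacy, then $\mathcal{A}$ satisfies $\epsilon$-Geo-Indistinguishability, i.e. for all $\textbf{s}_i,\textbf{s}_j\in\mathcal{S}$ and every set $Z$ of outputs, $\Pr(\mathcal{A}(\textbf{s}_i)\in Z)\leq e^{\epsilon\, d_E(\textbf{s}_i,\textbf{s}_j)}\Pr(\mathcal{A}(\textbf{s}_j)\in Z)$.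
   Context: A location policy graph is an undirected graph $\mathcal{G}=(\mathcal{S},\mathcal{E})$ whose nodes $\mathcal{S}$ are the possible locations and whose edges $\mathcal{E}$ indicate pairs of locations that must be indistinguishable. Two locations joined by an edge are called 1-neighbors. A randomized algorithm $\mathcal{A}$ taking a location as input satisfies $\{\epsilon,\mathcal{G}\}$-location privacy iff for every set $Z$ of possible outputs and every pair of 1-neighbors $\textbf{s},\textbf{s}'$ in $\mathcal{G}$, $\Pr(\mathcal{A}(\textbf{s})\in Z)\leq e^{\epsilon}\Pr(\mathcal{A}(\textbf{s}')\in Z)$. An algorithm satisfies $\epsilon$-Geo-Indistinguishability iff for all locations $\textbf{s}_i,\textbf{s}_j$ and all output sets $Z$, $\Pr(\mathcal{A}(\textbf{s}_i)\in Z)\leq e^{\epsilon d_E(\textbf{s}_i,\textbf{s}_j)}\Pr(\mathcal{A}(\textbf{s}_j)\in Z)$, where $d_E$ is Euclidean distance. *)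

theory Defs
  imports "HOL-Probability.Probability"
begin

type_synonym loc = "int \<times> int"

definition grid :: "int \<Rightarrow> int \<Rightarrow> int \<Rightarrow> int \<Rightarrow> loc set" where
  "grid x0 x1 y0 y1 = {x0..x1} \<times> {y0..y1}"

definition E1 :: "loc \<Rightarrow> loc \<Rightarrow> bool" where
  "E1 s s' \<longleftrightarrow> s \<noteq> s' \<and> max \<bar>fst s - fst s'\<bar> \<bar>snd s - snd s'\<bar> = 1"

definition dE :: "loc \<Rightarrow> loc \<Rightarrow> real" where
  "dE s s' = sqrt ((real_of_int (fst s - fst s'))\<^sup>2 + (real_of_int (snd s - snd s'))\<^sup>2)"

definition randomized_alg :: "loc set \<Rightarrow> (loc \<Rightarrow> 'b measure) \<Rightarrow> bool" where
  "randomized_alg S A \<longleftrightarrow> (\<forall>s\<in>S. prob_space (A s)) \<and>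
     (\<forall>s\<in>S. \<forall>s'\<in>S. sets (A s) = sets (A s'))"

definition location_privacy ::
  "real \<Rightarrow> loc set \<Rightarrow> (loc \<Rightarrow> loc \<Rightarrow> bool) \<Rightarrow> (loc \<Rightarrow> 'b measure) \<Rightarrow> bool" where
  "location_privacy \<epsilon> S E A \<longleftrightarrow>
     (\<forall>s\<in>S. \<forall>s'\<in>S. E s s' \<longrightarrow>
        (\<forall>Z\<in>sets (A s). measure (A s) Z \<le> exp \<epsilon> * measure (A s') Z))"

definition geo_ind :: "real \<Rightarrow> loc set \<Rightarrow> (loc \<Rightarrow> 'b measure) \<Rightarrow> bool" where
  "geo_ind \<epsilon> S A \<longleftrightarrow>
     (\<forall>si\<in>S. \<forall>sj\<in>S.
        (\<forall>Z\<in>sets (A si). measure (A si) Z \<le> exp (\<epsilon> * dE si sj) * measure (A sj) Z))"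

end

theory Submission
  imports Defs
begin

text \<open>Two grid points at Chebyshev distance \<open>n\<close> are joined in \<open>G\<^sub>1\<close> by a path of \<open>n\<close> edges
  (step diagonally towards the target until one coordinate agrees, then straight), so chaining the
  \<open>{\<epsilon>, G\<^sub>1}\<close>-privacy inequality along the path gives the factor \<open>exp (\<epsilon> n)\<close>. Since the Chebyshev
  distance never exceeds the Euclidean one, this implies \<open>\<epsilon>\<close>-Geo-Indistinguishability.\<close>

definition chebyshev_dist :: "loc \<Rightarrow> loc \<Rightarrow> int" where
  "chebyshev_dist s s' = max \<bar>fst s - fst s'\<bar> \<bar>snd s - snd s'\<bar>"

lemma chebyshev_dist_nonneg: "0 \<le> chebyshev_dist s s'"
  by (simp add: chebyshev_dist_def)

lemma chebyshev_dist_eq_0_iff: "chebyshev_dist s s' = 0 \<longleftrightarrow> s = s'"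
  by (cases s; cases s') (auto simp: chebyshev_dist_def max_def)

lemma chebyshev_dist_le_dE: "real_of_int (chebyshev_dist s s') \<le> dE s s'"
proof -
  have "\<bar>real_of_int (fst s - fst s')\<bar> \<le> dE s s'" "\<bar>real_of_int (snd s - snd s')\<bar> \<le> dE s s'"
    unfolding dE_def
    by (metis real_sqrt_abs real_sqrt_le_mono le_add_same_cancel1 zero_le_power2,
        metis real_sqrt_abs real_sqrt_le_mono le_add_same_cancel2 zero_le_power2)
  then show ?thesis by (simp add: chebyshev_dist_def max_def)
qed

lemma grid_step_towards:
  assumes "a \<in> grid x0 x1 y0 y1" "b \<in> grid x0 x1 y0 y1" "a \<noteq> b"
  obtains a' where "a' \<in> grid x0 x1 y0 y1" "E1 a a'"
    "chebyshev_dist a' b = chebyshev_dist a b - 1"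
proof -
  obtain ax ay bx "by" where ab: "a = (ax, ay)" "b = (bx, by)" by fastforce
  let ?a' = "(ax + sgn (bx - ax), ay + sgn (by - ay))"
  have "?a' \<in> grid x0 x1 y0 y1" using assms(1,2) by (auto simp: ab grid_def sgn_if)
  moreover have "E1 a ?a'" using assms(3) by (auto simp: ab E1_def sgn_if max_def)
  moreover have "chebyshev_dist ?a' b = chebyshev_dist a b - 1"
    using assms(3) by (auto simp: ab chebyshev_dist_def sgn_if max_def)
  ultimately show thesis by (rule that)
qed

lemma location_privacy_chebyshev_bound:
  assumes alg: "randomized_alg (grid x0 x1 y0 y1) A"
    and priv: "location_privacy \<epsilon> (grid x0 x1 y0 y1) E1 A"
    and a: "a \<in> grid x0 x1 y0 y1" and b: "b \<in> grid x0 x1 y0 y1" and Z: "Z \<in> sets (A a)"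
  shows "measure (A a) Z \<le> exp (\<epsilon> * chebyshev_dist a b) * measure (A b) Z"
proof -
  have "measure (A a) Z \<le> exp (\<epsilon> * n) * measure (A b) Z"
    if "chebyshev_dist a b = int n" "a \<in> grid x0 x1 y0 y1" "Z \<in> sets (A a)" for n a
    using that
  proof (induction n arbitrary: a)
    case 0
    then show ?case by (simp add: chebyshev_dist_eq_0_iff)
  next
    case (Suc n)
    then have "a \<noteq> b" by (auto simp flip: chebyshev_dist_eq_0_iff)
    with Suc.prems(2) b obtain a' where a': "a' \<in> grid x0 x1 y0 y1" "E1 a a'"
      and "chebyshev_dist a' b = chebyshev_dist a b - 1"
      by (rule grid_step_towards)
    with Suc.prems(1) have dist_a': "chebyshev_dist a' b = int n" by simp
    have "sets (A a') = sets (A a)" using alg a'(1) Suc.prems(2) unfolding randomized_alg_def by blast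
    then have IH: "measure (A a') Z \<le> exp (\<epsilon> * n) * measure (A b) Z"
      using Suc.IH[OF dist_a' a'(1)] Suc.prems(3) by simp
    have "measure (A a) Z \<le> exp \<epsilon> * measure (A a') Z"
      using priv Suc.prems(2,3) a' unfolding location_privacy_def by blast
    also have "\<dots> \<le> exp \<epsilon> * (exp (\<epsilon> * n) * measure (A b) Z)"
      using IH by simp
    also have "\<dots> = exp (\<epsilon> * Suc n) * measure (A b) Z"
      by (simp add: algebra_simps exp_add[symmetric])
    finally show ?case .
  qed
  from this[where n = "nat (chebyshev_dist a b)"] show ?thesis
    using a Z chebyshev_dist_nonneg by simp
qed

theorem theorem1:
  fixes x0 x1 y0 y1 :: int and \<epsilon> :: real and A :: "loc \<Rightarrow> 'b measure"
  assumes "\<epsilon> > 0"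
    and "randomized_alg (grid x0 x1 y0 y1) A"
    and "location_privacy \<epsilon> (grid x0 x1 y0 y1) E1 A"
  shows "geo_ind \<epsilon> (grid x0 x1 y0 y1) A"
  unfolding geo_ind_def
proof (intro ballI)
  fix si sj Z
  assume "si \<in> grid x0 x1 y0 y1" "sj \<in> grid x0 x1 y0 y1" "Z \<in> sets (A si)"
  then have "measure (A si) Z \<le> exp (\<epsilon> * chebyshev_dist si sj) * measure (A sj) Z"
    using location_privacy_chebyshev_bound assms(2,3) by blast
  also have "\<dots> \<le> exp (\<epsilon> * dE si sj) * measure (A sj) Z"
    using assms(1) chebyshev_dist_le_dE by (intro mult_right_mono) auto
  finally show "measure (A si) Z \<le> exp (\<epsilon> * dE si sj) * measure (A sj) Z" .
qed

end
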